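(* Let $f$ be a face. Then (1) $\|\mathbf 1_{\{f\text{ is vacant}\}}\|_f\le\lambda^{-1/4}$ for every $\lambda>0$; and (2) for each $c<\frac14$ and all sufficiently large $\lambda$, $\|\mathbf 1_{\{f\text{ is occupied}\}}\|_f\le1-c\lambda^{-1/2}$.
   Context: Tiles: $T_{(x,y)}=[x-1,x+1]\times[y-1,y+1]$; $\Omega=\{\sigma\in\{0,1\}^{\mathbb{Z}^2}: \sigma(u)=\sigma(v)=1,u\ne v\Rightarrow\mathrm{int}(T_u)\cap\mathrm{int}(T_v)=\emptyset\}$. A face is a unit square $[a,a+1]\times[b,b+1]$, $a,b\in\mathbb{Z}$ (itself a $1\times1$ rectangle); it is vacant in $\sigma$ if contained in no tile of $\sigma$, otherwise occupied. Rectangles: closed axis-parallel with integer corners; $R_{K\times L}=[0,K]\times[0,L]$. For a rectangle $\Lambda$: $w_{\Lambda,\lambda}(\sigma)=\lambda^{-\frac14\#\{\text{vacant faces}\subset\Lambda\}}$; $\Omega^{\mathrm{per}}_\Lambda$ = configurations periodic under $(\mathrm{Width}\Lambda,0),(0,\mathrm{Height}\Lambda)$; $\mu^{\mathrm{per}}_{\Lambda,\lambda}\propto w_{\Lambda,\lambda}$ on $\Omega^{\mathrm{per}}_\Lambda$. For $(\tau f)(\sigma)=f(\sigma\circ\tau)$; for $R=[x_0,x_0+K]\times[y_0,y_0+L]$, $T^R$ is the group generated by reflections through lines $x=x_0+mK$, $y=y_0+nL$; if $2K\mid\mathrm{Width}\Lambda$, $2L\mid\mathrm{Height}\Lambda$,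 $T^R_\Lambda$ is its quotient by translations in $\mathrm{Width}(\Lambda)\mathbb{Z}\times\mathrm{Height}(\Lambda)\mathbb{Z}$, $\|g\|_{R|\Lambda}=[\mu^{\mathrm{per}}_{\Lambda,\lambda}(\prod_{\tau\in T^R_\Lambda}\tau g)]^{1/\#T^R_\Lambda}$ for $g$ depending only on $\sigma|_{R\cap\mathbb{Z}^2}$, and $\|g\|_R=\limsup_{n\to\infty}\|g\|_{R|R_{n!\times n!}}$. *)

theory Defs
  imports "HOL-Analysis.Analysis" "HOL-Library.Liminf_Limsup" "HOL-Library.Extended_Real"
begin

text \<open>Configurations: sigma : Z^2 -> {0,1}, encoded with bool (True = 1).\<close>
type_synonym config = "int \<times> int \<Rightarrow> bool"

definition tile :: "int \<times> int \<Rightarrow> (real \<times> real) set" where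
  "tile u = {real_of_int (fst u) - 1 .. real_of_int (fst u) + 1}
          \<times> {real_of_int (snd u) - 1 .. real_of_int (snd u) + 1}"

definition Omega :: "config set" where
  "Omega = {\<sigma>. \<forall>u v. \<sigma> u \<and> \<sigma> v \<and> u \<noteq> v \<longrightarrow> interior (tile u) \<inter> interior (tile v) = {}}"

definition face :: "int \<times> int \<Rightarrow> (real \<times> real) set" where
  "face p = {real_of_int (fst p) .. real_of_int (fst p) + 1}
          \<times> {real_of_int (snd p) .. real_of_int (snd p) + 1}"

definition vacant :: "config \<Rightarrow> int \<times> int \<Rightarrow> bool" where
  "vacant \<sigma> p \<longleftrightarrow> \<not> (\<exists>u. \<sigma> u \<and> face p \<subseteq> tile u)"

definition rectR :: "int \<Rightarrow> int \<Rightarrow> (real \<times> real) set" where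
  "rectR W H = {0 .. real_of_int W} \<times> {0 .. real_of_int H}"

definition num_vacant :: "int \<Rightarrow> int \<Rightarrow> config \<Rightarrow> nat" where
  "num_vacant W H \<sigma> = card {p. face p \<subseteq> rectR W H \<and> vacant \<sigma> p}"

definition weight :: "real \<Rightarrow> int \<Rightarrow> int \<Rightarrow> config \<Rightarrow> real" where
  "weight lam W H \<sigma> = lam powr (- (1/4) * real (num_vacant W H \<sigma>))"

definition Omega_per :: "int \<Rightarrow> int \<Rightarrow> config set" where
  "Omega_per W H = {\<sigma> \<in> Omega. \<forall>x y. \<sigma> (x + W, y) = \<sigma> (x, y) \<and> \<sigma> (x, y + H) = \<sigma> (x, y)}"

definition mu_per :: "real \<Rightarrow> int \<Rightarrow> int \<Rightarrow> (config \<Rightarrow> real) \<Rightarrow> real" where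
  "mu_per lam W H F =
     (\<Sum>\<sigma>\<in>Omega_per W H. weight lam W H \<sigma> * F \<sigma>) / (\<Sum>\<sigma>\<in>Omega_per W H. weight lam W H \<sigma>)"

definition reflx :: "int \<Rightarrow> int \<times> int \<Rightarrow> int \<times> int" where
  "reflx c v = (2 * c - fst v, snd v)"

definition refly :: "int \<Rightarrow> int \<times> int \<Rightarrow> int \<times> int" where
  "refly c v = (fst v, 2 * c - snd v)"

inductive_set refl_group :: "int \<Rightarrow> int \<Rightarrow> int \<Rightarrow> int \<Rightarrow> (int \<times> int \<Rightarrow> int \<times> int) set"
  for x0 y0 K L where
  rg_id: "id \<in> refl_group x0 y0 K L"
| rg_x: "\<tau> \<in> refl_group x0 y0 K L \<Longrightarrow> reflx (x0 + m * K) \<circ> \<tau> \<in> refl_group x0 y0 K L"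
| rg_y: "\<tau> \<in> refl_group x0 y0 K L \<Longrightarrow> refly (y0 + n * L) \<circ> \<tau> \<in> refl_group x0 y0 K L"

definition trans_rel :: "int \<Rightarrow> int \<Rightarrow> int \<Rightarrow> int \<Rightarrow> int \<Rightarrow> int
    \<Rightarrow> ((int \<times> int \<Rightarrow> int \<times> int) \<times> (int \<times> int \<Rightarrow> int \<times> int)) set" where
  "trans_rel x0 y0 K L W H =
     {(\<tau>1, \<tau>2). \<tau>1 \<in> refl_group x0 y0 K L \<and> \<tau>2 \<in> refl_group x0 y0 K L \<and>
        (\<exists>i j. \<forall>v. \<tau>1 v = (fst (\<tau>2 v) + i * W, snd (\<tau>2 v) + j * H))}"

definition TRL :: "int \<Rightarrow> int \<Rightarrow> int \<Rightarrow> int \<Rightarrow> int \<Rightarrow> int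
    \<Rightarrow> (int \<times> int \<Rightarrow> int \<times> int) set set" where
  "TRL x0 y0 K L W H = refl_group x0 y0 K L // trans_rel x0 y0 K L W H"

definition act :: "(int \<times> int \<Rightarrow> int \<times> int) set \<Rightarrow> (config \<Rightarrow> real) \<Rightarrow> config \<Rightarrow> real" where
  "act C g \<sigma> = g (\<sigma> \<circ> (SOME \<tau>. \<tau> \<in> C))"

definition norm_RL :: "(config \<Rightarrow> real) \<Rightarrow> int \<Rightarrow> int \<Rightarrow> int \<Rightarrow> int \<Rightarrow> real \<Rightarrow> int \<Rightarrow> int \<Rightarrow> real" where
  "norm_RL g x0 y0 K L lam W H =
     (mu_per lam W H (\<lambda>\<sigma>. \<Prod>C\<in>TRL x0 y0 K L W H. act C g \<sigma>))
       powr (1 / real (card (TRL x0 y0 K L W H)))"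

definition norm_R :: "(config \<Rightarrow> real) \<Rightarrow> int \<Rightarrow> int \<Rightarrow> int \<Rightarrow> int \<Rightarrow> real \<Rightarrow> ereal" where
  "norm_R g x0 y0 K L lam =
     limsup (\<lambda>n. ereal (norm_RL g x0 y0 K L lam (fact n) (fact n)))"

definition norm_face :: "(config \<Rightarrow> real) \<Rightarrow> int \<times> int \<Rightarrow> real \<Rightarrow> ereal" where
  "norm_face g p lam = norm_R g (fst p) (snd p) 1 1 lam"

definition vacant_ind :: "int \<times> int \<Rightarrow> config \<Rightarrow> real" where
  "vacant_ind p \<sigma> = (if vacant \<sigma> p then 1 else 0)"

definition occupied_ind :: "int \<times> int \<Rightarrow> config \<Rightarrow> real" where
  "occupied_ind p \<sigma> = (if vacant \<sigma> p then 0 else 1)"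

end

theory Submission
  imports Defs
begin

text \<open>The chessboard estimate reduces both bounds to products over the reflection group of the
  face. For \<open>f\<close> vacant, the reflected product is the indicator that every face is vacant, i.e.\ that
  the configuration is empty; its weight is \<open>\<lambda>^{-N/4}\<close> for the \<open>N\<close> faces of the torus, against a
  partition sum at least one. For \<open>f\<close> occupied, it is the indicator that no face is vacant; such
  configurations have weight one and are determined by one row and one column, so there are at
  most \<open>2^{W+H}\<close> of them. The partition sum is bounded below by configurations made of columns
  of width two, each a stack of tiles and unit gaps: with \<open>t = \<lambda>^{-1/2}\<close> a column of height \<open>L\<close>
  contributes \<open>a_L(t) = \<Sum> t^{#gaps}\<close>, and \<open>a_{L+2} = a_L + t a_{L+1}\<close> gives growth \<open>r^L\<close> with
  \<open>r\<^sup>2 = t r + 1\<close>. Taking \<open>N\<close>-th roots the bound tends to \<open>r^{-1/2} = 1 - t/4 + O(t\<^sup>2)\<close>, which is at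
  most \<open>1 - c t\<close> for \<open>c < 1/4\<close> and small \<open>t\<close>.\<close>

lemma face_subset_tile_iff:
  "face p \<subseteq> tile u \<longleftrightarrow> (fst u = fst p \<or> fst u = fst p + 1) \<and> (snd u = snd p \<or> snd u = snd p + 1)"
proof
  assume "face p \<subseteq> tile u"
  then have "(real_of_int (fst p), real_of_int (snd p)) \<in> tile u"
    and "(real_of_int (fst p) + 1, real_of_int (snd p) + 1) \<in> tile u"
    unfolding face_def by auto
  then have "fst u - 1 \<le> fst p" "fst p \<le> fst u" "snd u - 1 \<le> snd p" "snd p \<le> snd u"
    unfolding tile_def by auto
  then show "(fst u = fst p \<or> fst u = fst p + 1) \<and> (snd u = snd p \<or> snd u = snd p + 1)"
    by auto
qed (auto simp: face_def tile_def)

lemma vacant_iff: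
  "vacant \<sigma> (a, b) \<longleftrightarrow> \<not> (\<sigma> (a, b) \<or> \<sigma> (a + 1, b) \<or> \<sigma> (a, b + 1) \<or> \<sigma> (a + 1, b + 1))"
  unfolding vacant_def face_subset_tile_iff by auto

lemma face_subset_rectR_iff:
  "face p \<subseteq> rectR W H \<longleftrightarrow> 0 \<le> fst p \<and> fst p < W \<and> 0 \<le> snd p \<and> snd p < H"
proof
  assume "face p \<subseteq> rectR W H"
  then have "(real_of_int (fst p), real_of_int (snd p)) \<in> rectR W H"
    and "(real_of_int (fst p) + 1, real_of_int (snd p) + 1) \<in> rectR W H"
    unfolding face_def by auto
  then show "0 \<le> fst p \<and> fst p < W \<and> 0 \<le> snd p \<and> snd p < H"
    unfolding rectR_def by auto
next
  assume "0 \<le> fst p \<and> fst p < W \<and> 0 \<le> snd p \<and> snd p < H"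
  then have "0 \<le> fst p" "real_of_int (fst p) + 1 \<le> real_of_int W"
    "0 \<le> snd p" "real_of_int (snd p) + 1 \<le> real_of_int H"
    by (simp_all flip: of_int_add add: of_int_le_iff del: of_int_add)
  then show "face p \<subseteq> rectR W H"
    unfolding face_def rectR_def by auto
qed

lemma interior_tiles_disjoint_iff:
  "interior (tile u) \<inter> interior (tile v) = {} \<longleftrightarrow> 2 \<le> \<bar>fst u - fst v\<bar> \<or> 2 \<le> \<bar>snd u - snd v\<bar>"
proof -
  have interior_tile: "interior (tile w) =
      {real_of_int (fst w) - 1 <..< real_of_int (fst w) + 1} \<times>
      {real_of_int (snd w) - 1 <..< real_of_int (snd w) + 1}" for w
    unfolding tile_def interior_Times by simp
  have "interior (tile u) \<inter> interior (tile v) = {} \<longleftrightarrow>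
      2 \<le> \<bar>real_of_int (fst u) - real_of_int (fst v)\<bar> \<or>
      2 \<le> \<bar>real_of_int (snd u) - real_of_int (snd v)\<bar>"
  proof
    assume "interior (tile u) \<inter> interior (tile v) = {}"
    moreover have "((real_of_int (fst u) + real_of_int (fst v)) / 2,
        (real_of_int (snd u) + real_of_int (snd v)) / 2) \<in> interior (tile u) \<inter> interior (tile v)"
      if "\<bar>real_of_int (fst u) - real_of_int (fst v)\<bar> < 2"
         "\<bar>real_of_int (snd u) - real_of_int (snd v)\<bar> < 2"
      using that unfolding interior_tile by (auto simp: abs_less_iff)
    ultimately show "2 \<le> \<bar>real_of_int (fst u) - real_of_int (fst v)\<bar> \<or>
        2 \<le> \<bar>real_of_int (snd u) - real_of_int (snd v)\<bar>"
      by fastforce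
  qed (auto simp: interior_tile abs_le_iff)
  then show ?thesis
    by (metis of_int_abs of_int_diff of_int_le_iff of_int_numeral)
qed

lemma Omega_iff:
  "\<sigma> \<in> Omega \<longleftrightarrow>
     (\<forall>u v. \<sigma> u \<and> \<sigma> v \<and> u \<noteq> v \<longrightarrow> 2 \<le> \<bar>fst u - fst v\<bar> \<or> 2 \<le> \<bar>snd u - snd v\<bar>)"
  unfolding Omega_def interior_tiles_disjoint_iff by simp

lemma Omega_no_neighbour:
  assumes "\<sigma> \<in> Omega" "\<sigma> u" "\<sigma> v" "u \<noteq> v" "\<bar>fst u - fst v\<bar> \<le> 1" "\<bar>snd u - snd v\<bar> \<le> 1"
  shows False
  using assms unfolding Omega_iff by fastforce

lemma periodic_shift:
  fixes f :: "int \<Rightarrow> 'a"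
  assumes "\<And>x. f (x + W) = f x"
  shows "f (x + i * W) = f x"
proof (induction i rule: int_induct[where k = 0])
  case (step1 i)
  then show ?case using assms[of "x + i * W"] by (simp add: algebra_simps)
next
  case (step2 i)
  then show ?case using assms[of "x + (i - 1) * W"] by (simp add: algebra_simps)
qed simp

lemma Omega_per_shift:
  assumes "\<sigma> \<in> Omega_per W H"
  shows "\<sigma> (x + i * W, y + j * H) = \<sigma> (x, y)"
proof -
  have "\<And>x y. \<sigma> (x + W, y) = \<sigma> (x, y)" "\<And>x y. \<sigma> (x, y + H) = \<sigma> (x, y)"
    using assms unfolding Omega_per_def by auto
  then show ?thesis
    using periodic_shift[of "\<lambda>x. \<sigma> (x, y + j * H)" W x i] periodic_shift[of "\<lambda>y. \<sigma> (x, y)" H y j]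
    by simp
qed

lemma Omega_per_mod:
  assumes "\<sigma> \<in> Omega_per W H"
  shows "\<sigma> (x, y) = \<sigma> (x mod W, y mod H)"
  using Omega_per_shift[OF assms, of "x mod W" "x div W" "y mod H" "y div H"]
  by (simp add: mod_div_mult_eq)

lemma vacant_Omega_per_shift:
  assumes "\<sigma> \<in> Omega_per W H"
  shows "vacant \<sigma> (x + i * W, y + j * H) = vacant \<sigma> (x, y)"
  unfolding vacant_iff
  using Omega_per_shift[OF assms, of x i y j] Omega_per_shift[OF assms, of "x + 1" i y j]
    Omega_per_shift[OF assms, of x i "y + 1" j] Omega_per_shift[OF assms, of "x + 1" i "y + 1" j]
  by (simp add: algebra_simps)

lemma finite_Omega_per:
  assumes "W > 0" "H > 0"
  shows "finite (Omega_per W H)"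
proof -
  let ?B = "{0..<W} \<times> {0..<H}"
  have "inj_on (\<lambda>\<sigma>. {p \<in> ?B. \<sigma> p}) (Omega_per W H)"
  proof (rule inj_onI, rule ext)
    fix \<sigma> \<tau> :: config and p :: "int \<times> int"
    assume \<sigma>: "\<sigma> \<in> Omega_per W H" and \<tau>: "\<tau> \<in> Omega_per W H"
      and eq: "{p \<in> ?B. \<sigma> p} = {p \<in> ?B. \<tau> p}"
    obtain x y where p: "p = (x, y)" by fastforce
    have "(x mod W, y mod H) \<in> ?B" using assms by auto
    then have "\<sigma> (x mod W, y mod H) = \<tau> (x mod W, y mod H)" using eq by blast
    then show "\<sigma> p = \<tau> p" using Omega_per_mod[OF \<sigma>] Omega_per_mod[OF \<tau>] p by simp
  qed
  then show ?thesis
    by (rule inj_on_finite[where B = "Pow ?B"]) auto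
qed

lemma empty_config_in_Omega_per: "(\<lambda>_. False) \<in> Omega_per W H"
  unfolding Omega_per_def Omega_def by simp

section \<open>The reflection group of a face\<close>

text \<open>Normal form of the elements of the group generated by the reflections through the lines
  \<open>x = a + m\<close> and \<open>y = b + n\<close>: in each coordinate, an optional reflection through \<open>a\<close> (resp. \<open>b\<close>)
  followed by an even translation.\<close>
definition refl_elem :: "int \<Rightarrow> int \<Rightarrow> bool \<times> int \<times> bool \<times> int \<Rightarrow> int \<times> int \<Rightarrow> int \<times> int" where
  "refl_elem a b = (\<lambda>(s1, k1, s2, k2) (x, y).
     (a + (if s1 then x - a else a - x) + 2 * k1, b + (if s2 then y - b else b - y) + 2 * k2))"

lemma refl_elem_apply:
  "refl_elem a b (s1, k1, s2, k2) (x, y) =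
     (a + (if s1 then x - a else a - x) + 2 * k1, b + (if s2 then y - b else b - y) + 2 * k2)"
  by (simp add: refl_elem_def)

lemma refl_group_eq_range_refl_elem: "refl_group a b 1 1 = range (refl_elem a b)"
proof (intro equalityI subsetI)
  fix \<tau> assume "\<tau> \<in> refl_group a b 1 1"
  then show "\<tau> \<in> range (refl_elem a b)"
  proof induction
    case rg_id
    have "id = refl_elem a b (True, 0, True, 0)" by (auto simp: refl_elem_def)
    then show ?case by blast
  next
    case (rg_x \<tau> m)
    then obtain s1 k1 s2 k2 where "\<tau> = refl_elem a b (s1, k1, s2, k2)" by auto
    then have "reflx (a + m * 1) \<circ> \<tau> = refl_elem a b (\<not> s1, m - k1, s2, k2)"
      by (auto simp: refl_elem_def reflx_def)
    then show ?case by blast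
  next
    case (rg_y \<tau> n)
    then obtain s1 k1 s2 k2 where "\<tau> = refl_elem a b (s1, k1, s2, k2)" by auto
    then have "refly (b + n * 1) \<circ> \<tau> = refl_elem a b (s1, k1, \<not> s2, n - k2)"
      by (auto simp: refl_elem_def refly_def)
    then show ?case by blast
  qed
next
  fix \<tau> assume "\<tau> \<in> range (refl_elem a b)"
  then obtain s1 k1 s2 k2 where \<tau>: "\<tau> = refl_elem a b (s1, k1, s2, k2)" by auto
  \<comment> \<open>written in the literal shape of the introduction rules of \<open>refl_group\<close>\<close>
  define \<rho> where "\<rho> = refly (b + k2 * 1) \<circ> (if s2 then refly (b + 0 * 1) \<circ> id else id)"
  have "\<rho> \<in> refl_group a b 1 1"
    unfolding \<rho>_def by (cases s2) (simp only: if_True if_False; (rule refl_group.intros)+)+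
  then have "reflx (a + k1 * 1) \<circ> (if s1 then reflx (a + 0 * 1) \<circ> \<rho> else \<rho>) \<in> refl_group a b 1 1"
    by (cases s1) (simp only: if_True if_False; (rule refl_group.rg_x)+)+
  moreover have "reflx (a + k1 * 1) \<circ> (if s1 then reflx (a + 0 * 1) \<circ> \<rho> else \<rho>) = \<tau>"
    unfolding \<tau> \<rho>_def by (auto simp: refl_elem_def reflx_def refly_def)
  ultimately show "\<tau> \<in> refl_group a b 1 1" by simp
qed

lemma equiv_trans_rel: "equiv (refl_group x0 y0 K L) (trans_rel x0 y0 K L W H)"
proof (rule equivI)
  show "trans_rel x0 y0 K L W H \<subseteq> refl_group x0 y0 K L \<times> refl_group x0 y0 K L"
    unfolding trans_rel_def by auto
  show "refl_on (refl_group x0 y0 K L) (trans_rel x0 y0 K L W H)"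
    unfolding refl_on_def trans_rel_def by (auto intro!: exI[of _ 0])
  show "sym (trans_rel x0 y0 K L W H)"
  proof (rule symI)
    fix \<tau>1 \<tau>2 assume "(\<tau>1, \<tau>2) \<in> trans_rel x0 y0 K L W H"
    then obtain i j where "\<forall>v. \<tau>1 v = (fst (\<tau>2 v) + i * W, snd (\<tau>2 v) + j * H)"
      and "\<tau>1 \<in> refl_group x0 y0 K L" "\<tau>2 \<in> refl_group x0 y0 K L"
      unfolding trans_rel_def by auto
    moreover from this(1) have "\<forall>v. \<tau>2 v = (fst (\<tau>1 v) + (- i) * W, snd (\<tau>1 v) + (- j) * H)"
      by simp
    ultimately show "(\<tau>2, \<tau>1) \<in> trans_rel x0 y0 K L W H"
      unfolding trans_rel_def by blast
  qed
  show "trans (trans_rel x0 y0 K L W H)"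
  proof (rule transI)
    fix \<tau>1 \<tau>2 \<tau>3
    assume "(\<tau>1, \<tau>2) \<in> trans_rel x0 y0 K L W H" "(\<tau>2, \<tau>3) \<in> trans_rel x0 y0 K L W H"
    then obtain i j i' j' where "\<forall>v. \<tau>1 v = (fst (\<tau>2 v) + i * W, snd (\<tau>2 v) + j * H)"
      "\<forall>v. \<tau>2 v = (fst (\<tau>3 v) + i' * W, snd (\<tau>3 v) + j' * H)"
      and "\<tau>1 \<in> refl_group x0 y0 K L" "\<tau>3 \<in> refl_group x0 y0 K L"
      unfolding trans_rel_def by auto
    moreover from this(1,2)
    have "\<forall>v. \<tau>1 v = (fst (\<tau>3 v) + (i + i') * W, snd (\<tau>3 v) + (j + j') * H)"
      by (simp add: algebra_simps)
    ultimately show "(\<tau>1, \<tau>3) \<in> trans_rel x0 y0 K L W H"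
      unfolding trans_rel_def by blast
  qed
qed

abbreviation refl_coset :: "int \<Rightarrow> int \<Rightarrow> int \<Rightarrow> int \<Rightarrow> bool \<times> int \<times> bool \<times> int
    \<Rightarrow> (int \<times> int \<Rightarrow> int \<times> int) set" where
  "refl_coset a b W H p \<equiv> trans_rel a b 1 1 W H `` {refl_elem a b p}"

definition coset_index :: "int \<Rightarrow> int \<Rightarrow> (bool \<times> int \<times> bool \<times> int) set" where
  "coset_index w h = UNIV \<times> {0..<w} \<times> UNIV \<times> {0..<h}"

lemma refl_elem_trans_rel_iff:
  "(refl_elem a b p, refl_elem a b q) \<in> trans_rel a b 1 1 W H \<longleftrightarrow>
     (\<exists>i j. \<forall>v. refl_elem a b p v = (fst (refl_elem a b q v) + i * W, snd (refl_elem a b q v) + j * H))"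
  unfolding trans_rel_def refl_group_eq_range_refl_elem by auto

lemma refl_elem_trans_rel_mod:
  "(refl_elem a b (s1, k1, s2, k2), refl_elem a b (s1, k1 mod w, s2, k2 mod h)) \<in> trans_rel a b 1 1 (2 * w) (2 * h)"
proof -
  have "refl_elem a b (s1, k1, s2, k2) v =
      (fst (refl_elem a b (s1, k1 mod w, s2, k2 mod h) v) + (k1 div w) * (2 * w),
       snd (refl_elem a b (s1, k1 mod w, s2, k2 mod h) v) + (k2 div h) * (2 * h))" for v
  proof -
    have "2 * k1 = 2 * (k1 mod w) + k1 div w * (2 * w)" "2 * k2 = 2 * (k2 mod h) + k2 div h * (2 * h)"
      by (metis mult.left_commute distrib_left mod_div_mult_eq)+
    then show ?thesis by (cases v) (simp add: refl_elem_apply)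
  qed
  then show ?thesis unfolding refl_elem_trans_rel_iff by blast
qed

lemma TRL_eq_image_coset_index:
  assumes "w > 0" "h > 0"
  shows "TRL a b 1 1 (2 * w) (2 * h) = refl_coset a b (2 * w) (2 * h) ` coset_index w h"
proof (intro equalityI subsetI)
  fix C assume "C \<in> TRL a b 1 1 (2 * w) (2 * h)"
  then obtain s1 k1 s2 k2 where C: "C = refl_coset a b (2 * w) (2 * h) (s1, k1, s2, k2)"
    unfolding TRL_def quotient_def refl_group_eq_range_refl_elem by auto
  have "C = refl_coset a b (2 * w) (2 * h) (s1, k1 mod w, s2, k2 mod h)"
    unfolding C by (rule equiv_class_eq[OF equiv_trans_rel refl_elem_trans_rel_mod])
  moreover have "(s1, k1 mod w, s2, k2 mod h) \<in> coset_index w h"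
    using assms unfolding coset_index_def by auto
  ultimately show "C \<in> refl_coset a b (2 * w) (2 * h) ` coset_index w h"
    by blast
qed (auto simp: TRL_def quotient_def refl_group_eq_range_refl_elem)

lemma refl_elem_in_refl_group: "refl_elem a b p \<in> refl_group a b 1 1"
  unfolding refl_group_eq_range_refl_elem by simp

lemma eq_mult_bounded:
  fixes k k' i w :: int
  assumes "0 \<le> k" "k < w" "0 \<le> k'" "k' < w" "k = k' + i * w"
  shows "i = 0"
proof -
  have "k div w = i + k' div w"
    unfolding assms(5) by (rule div_mult_self1) (use assms in linarith)
  then show ?thesis using div_pos_pos_trivial[OF assms(1,2)] div_pos_pos_trivial[OF assms(3,4)] by linarith
qed

lemma inj_on_refl_coset:
  assumes "w > 0" "h > 0"
  shows "inj_on (refl_coset a b (2 * w) (2 * h)) (coset_index w h)"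
proof (rule inj_onI)
  fix p q assume p: "p \<in> coset_index w h" and q: "q \<in> coset_index w h"
    and eq: "refl_coset a b (2 * w) (2 * h) p = refl_coset a b (2 * w) (2 * h) q"
  obtain s1 k1 s2 k2 where pp: "p = (s1, k1, s2, k2)" by (cases p)
  obtain s1' k1' s2' k2' where qq: "q = (s1', k1', s2', k2')" by (cases q)
  have "(refl_elem a b p, refl_elem a b q) \<in> trans_rel a b 1 1 (2 * w) (2 * h)"
    by (rule eq_equiv_class[OF eq equiv_trans_rel refl_elem_in_refl_group])
  then obtain i j where ij: "\<And>v. refl_elem a b p v =
      (fst (refl_elem a b q v) + i * (2 * w), snd (refl_elem a b q v) + j * (2 * h))"
    unfolding refl_elem_trans_rel_iff by blast
  have "k1 = k1' + i * w" "k2 = k2' + j * h"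
    using ij[of "(a, b)"] by (simp_all add: pp qq refl_elem_apply)
  moreover have "0 \<le> k1" "k1 < w" "0 \<le> k1'" "k1' < w" "0 \<le> k2" "k2 < h" "0 \<le> k2'" "k2' < h"
    using p q unfolding pp qq coset_index_def by auto
  ultimately have "i = 0" "j = 0" "k1 = k1'" "k2 = k2'"
    using eq_mult_bounded by (metis add.right_neutral mult_zero_left)+
  moreover have "s1 = s1'" "s2 = s2'"
    using ij[of "(a + 1, b + 1)"] calculation by (auto simp: pp qq refl_elem_apply split: if_splits)
  ultimately show "p = q" using pp qq by simp
qed

lemma card_TRL:
  assumes "w > 0" "h > 0"
  shows "card (TRL a b 1 1 (2 * w) (2 * h)) = nat (2 * w) * nat (2 * h)"
proof -
  have "card (coset_index w h) = 2 * nat w * (2 * nat h)"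
    unfolding coset_index_def by (simp add: card_cartesian_product)
  then show ?thesis
    using assms unfolding TRL_eq_image_coset_index[OF assms] card_image[OF inj_on_refl_coset[OF assms]]
    by (simp add: nat_mult_distrib)
qed

lemma act_refl_coset:
  assumes "\<sigma> \<in> Omega_per (2 * w) (2 * h)"
  shows "act (refl_coset a b (2 * w) (2 * h) p) g \<sigma> = g (\<sigma> \<circ> refl_elem a b p)"
proof -
  let ?C = "refl_coset a b (2 * w) (2 * h) p"
  have "refl_elem a b p \<in> ?C"
    by (rule equiv_class_self[OF equiv_trans_rel refl_elem_in_refl_group])
  then have "(SOME \<tau>. \<tau> \<in> ?C) \<in> ?C" by (rule someI[of "\<lambda>\<tau>. \<tau> \<in> ?C"])
  then obtain i j where "\<forall>v. refl_elem a b p v =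
      (fst ((SOME \<tau>. \<tau> \<in> ?C) v) + i * (2 * w), snd ((SOME \<tau>. \<tau> \<in> ?C) v) + j * (2 * h))"
    unfolding trans_rel_def by blast
  then have "\<sigma> \<circ> (SOME \<tau>. \<tau> \<in> ?C) = \<sigma> \<circ> refl_elem a b p"
    by (auto simp: Omega_per_shift[OF assms])
  then show ?thesis by (simp add: act_def)
qed

lemma prod_TRL_act:
  assumes "w > 0" "h > 0" "\<sigma> \<in> Omega_per (2 * w) (2 * h)"
  shows "(\<Prod>C\<in>TRL a b 1 1 (2 * w) (2 * h). act C g \<sigma>) = (\<Prod>p\<in>coset_index w h. g (\<sigma> \<circ> refl_elem a b p))"
  unfolding TRL_eq_image_coset_index[OF assms(1,2)] prod.reindex[OF inj_on_refl_coset[OF assms(1,2)]]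
  by (simp add: act_refl_coset[OF assms(3)])

lemma vacant_comp_refl_elem:
  "vacant (\<sigma> \<circ> refl_elem a b (s1, k1, s2, k2)) (a, b) =
     vacant \<sigma> (a + 2 * k1 - (if s1 then 0 else 1), b + 2 * k2 - (if s2 then 0 else 1))"
  unfolding vacant_iff comp_def refl_elem_apply by (cases s1; cases s2) (auto simp: algebra_simps)

lemma refl_offset_exists:
  fixes w :: int
  assumes "w > 0"
  obtains s k i where "0 \<le> k" "k < w" "x = a + 2 * k - (if s then 0 else 1) + i * (2 * w)"
proof -
  define e where "e = (x - a + 1) div 2"
  have "x = a + 2 * e - (if x - a = 2 * e then 0 else 1)"
    unfolding e_def by presburger
  moreover have "2 * e = 2 * (e mod w) + e div w * (2 * w)"
    by (metis mult.left_commute distrib_left mod_div_mult_eq)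
  ultimately show ?thesis
    using assms that[of "e mod w" "x - a = 2 * e" "e div w"] by simp
qed

lemma vacant_eq_of_refl_coset:
  assumes "w > 0" "h > 0" "\<sigma> \<in> Omega_per (2 * w) (2 * h)"
    and "\<forall>p\<in>coset_index w h. vacant (\<sigma> \<circ> refl_elem a b p) (a, b) = V"
  shows "vacant \<sigma> (x, y) = V"
proof -
  obtain s1 k1 i where 1: "0 \<le> k1" "k1 < w" "x = a + 2 * k1 - (if s1 then 0 else 1) + i * (2 * w)"
    using refl_offset_exists[OF assms(1)] .
  obtain s2 k2 j where 2: "0 \<le> k2" "k2 < h" "y = b + 2 * k2 - (if s2 then 0 else 1) + j * (2 * h)"
    using refl_offset_exists[OF assms(2)] .
  have "(s1, k1, s2, k2) \<in> coset_index w h" using 1 2 unfolding coset_index_def by auto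
  then have "V = vacant \<sigma> (a + 2 * k1 - (if s1 then 0 else 1), b + 2 * k2 - (if s2 then 0 else 1))"
    using assms(4) vacant_comp_refl_elem by metis
  also have "\<dots> = vacant \<sigma> (x, y)"
    unfolding 1(3) 2(3) by (rule vacant_Omega_per_shift[OF assms(3), symmetric])
  finally show ?thesis by simp
qed

lemma prod_TRL_act_vacancy:
  assumes "w > 0" "h > 0" "\<sigma> \<in> Omega_per (2 * w) (2 * h)"
  shows "(\<Prod>C\<in>TRL a b 1 1 (2 * w) (2 * h). act C (\<lambda>\<sigma>. if vacant \<sigma> (a, b) = V then 1 else 0) \<sigma>) =
    (if \<forall>q. vacant \<sigma> q = V then 1 else 0)"
  unfolding prod_TRL_act[OF assms]
proof (cases "\<forall>p\<in>coset_index w h. vacant (\<sigma> \<circ> refl_elem a b p) (a, b) = V")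
  case True
  then have "\<forall>q. vacant \<sigma> q = V" using vacant_eq_of_refl_coset[OF assms] by auto
  then show "(\<Prod>p\<in>coset_index w h. if vacant (\<sigma> \<circ> refl_elem a b p) (a, b) = V then 1 else 0 :: real) =
      (if \<forall>q. vacant \<sigma> q = V then 1 else 0)"
    using True by simp
next
  case False
  then obtain s1 k1 s2 k2 where p: "(s1, k1, s2, k2) \<in> coset_index w h"
    and ne: "vacant (\<sigma> \<circ> refl_elem a b (s1, k1, s2, k2)) (a, b) \<noteq> V"
    by auto
  have "finite (coset_index w h)" unfolding coset_index_def by simp
  then have "(\<Prod>p\<in>coset_index w h. if vacant (\<sigma> \<circ> refl_elem a b p) (a, b) = V then 1 else 0 :: real) = 0"
    using p ne by (auto intro!: prod_zero bexI[where x = "(s1, k1, s2, k2)"])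
  moreover have "\<not> (\<forall>q. vacant \<sigma> q = V)"
    using ne unfolding vacant_comp_refl_elem by blast
  ultimately show "(\<Prod>p\<in>coset_index w h. if vacant (\<sigma> \<circ> refl_elem a b p) (a, b) = V then 1 else 0 :: real) =
      (if \<forall>q. vacant \<sigma> q = V then 1 else 0)"
    by simp
qed

lemma all_vacant_iff_empty: "(\<forall>q. vacant \<sigma> q) \<longleftrightarrow> \<sigma> = (\<lambda>_. False)"
proof
  assume "\<forall>q. vacant \<sigma> q"
  then show "\<sigma> = (\<lambda>_. False)"
    unfolding vacant_def using face_subset_tile_iff by blast
qed (simp add: vacant_def)

lemma prod_TRL_act_vacant_ind:
  assumes "w > 0" "h > 0" "\<sigma> \<in> Omega_per (2 * w) (2 * h)"
  shows "(\<Prod>C\<in>TRL a b 1 1 (2 * w) (2 * h). act C (vacant_ind (a, b)) \<sigma>) =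
    (if \<sigma> = (\<lambda>_. False) then 1 else 0)"
proof -
  have "vacant_ind (a, b) = (\<lambda>\<sigma>. if vacant \<sigma> (a, b) = True then 1 else 0)"
    by (simp add: fun_eq_iff vacant_ind_def)
  moreover have "(\<forall>q. vacant \<sigma> q = True) \<longleftrightarrow> \<sigma> = (\<lambda>_. False)"
    using all_vacant_iff_empty by simp
  ultimately show ?thesis
    using prod_TRL_act_vacancy[OF assms, of a b True] by (simp only:)
qed

lemma prod_TRL_act_occupied_ind:
  assumes "w > 0" "h > 0" "\<sigma> \<in> Omega_per (2 * w) (2 * h)"
  shows "(\<Prod>C\<in>TRL a b 1 1 (2 * w) (2 * h). act C (occupied_ind (a, b)) \<sigma>) =
    (if \<forall>q. \<not> vacant \<sigma> q then 1 else 0)"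
proof -
  have "occupied_ind (a, b) = (\<lambda>\<sigma>. if vacant \<sigma> (a, b) = False then 1 else 0)"
    by (simp add: fun_eq_iff occupied_ind_def)
  then show ?thesis
    using prod_TRL_act_vacancy[OF assms, of a b False] by simp
qed

section \<open>Configurations without vacant faces\<close>

lemma fully_occupied_corner:
  assumes "\<sigma> \<in> Omega" "\<forall>q. \<not> vacant \<sigma> q"
  shows "\<sigma> (x + 1, y + 1) \<longleftrightarrow> \<not> \<sigma> (x, y + 1) \<and> \<not> \<sigma> (x, y) \<and> \<not> \<sigma> (x + 1, y)"
proof
  assume "\<sigma> (x + 1, y + 1)"
  then show "\<not> \<sigma> (x, y + 1) \<and> \<not> \<sigma> (x, y) \<and> \<not> \<sigma> (x + 1, y)"
    using Omega_no_neighbour[OF assms(1)] by fastforce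
next
  assume "\<not> \<sigma> (x, y + 1) \<and> \<not> \<sigma> (x, y) \<and> \<not> \<sigma> (x + 1, y)"
  then show "\<sigma> (x + 1, y + 1)"
    using assms(2) vacant_iff by blast
qed

lemma fully_occupied_eq_on_quadrant:
  assumes \<sigma>1: "\<sigma>1 \<in> Omega" "\<forall>q. \<not> vacant \<sigma>1 q" and \<sigma>2: "\<sigma>2 \<in> Omega" "\<forall>q. \<not> vacant \<sigma>2 q"
    and row: "\<And>x. \<sigma>1 (x, 0) = \<sigma>2 (x, 0)" and column: "\<And>y. \<sigma>1 (0, y) = \<sigma>2 (0, y)"
  shows "\<sigma>1 (int i, int j) = \<sigma>2 (int i, int j)"
proof (induction j arbitrary: i)
  case (Suc j)
  note IH_row = Suc.IH
  show ?case
  proof (induction i)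
    case (Suc i)
    have "\<sigma>1 (int i + 1, int j + 1) = \<sigma>2 (int i + 1, int j + 1)"
      unfolding fully_occupied_corner[OF \<sigma>1] fully_occupied_corner[OF \<sigma>2]
      using Suc.IH IH_row[of i] IH_row[of "Suc i"] by (simp add: add.commute)
    then show ?case by (simp add: add.commute)
  qed (simp add: column)
qed (simp add: row)

lemma fully_occupied_eq:
  assumes "W > 0" "H > 0"
    and \<sigma>1: "\<sigma>1 \<in> Omega_per W H" "\<forall>q. \<not> vacant \<sigma>1 q" and \<sigma>2: "\<sigma>2 \<in> Omega_per W H" "\<forall>q. \<not> vacant \<sigma>2 q"
    and row: "\<forall>x\<in>{0..<W}. \<sigma>1 (x, 0) = \<sigma>2 (x, 0)" and column: "\<forall>y\<in>{0..<H}. \<sigma>1 (0, y) = \<sigma>2 (0, y)"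
  shows "\<sigma>1 = \<sigma>2"
proof
  fix p :: "int \<times> int"
  obtain x y where p: "p = (x, y)" by fastforce
  have "\<sigma>1 \<in> Omega" "\<sigma>2 \<in> Omega" using \<sigma>1 \<sigma>2 unfolding Omega_per_def by auto
  moreover have "\<sigma>1 (x', 0) = \<sigma>2 (x', 0)" for x'
    using Omega_per_mod[OF \<sigma>1(1), of x' 0] Omega_per_mod[OF \<sigma>2(1), of x' 0] row assms(1) by simp
  moreover have "\<sigma>1 (0, y') = \<sigma>2 (0, y')" for y'
    using Omega_per_mod[OF \<sigma>1(1), of 0 y'] Omega_per_mod[OF \<sigma>2(1), of 0 y'] column assms(2) by simp
  ultimately have "\<sigma>1 (int (nat (x mod W)), int (nat (y mod H))) = \<sigma>2 (int (nat (x mod W)), int (nat (y mod H)))"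
    using fully_occupied_eq_on_quadrant \<sigma>1(2) \<sigma>2(2) by blast
  then show "\<sigma>1 p = \<sigma>2 p"
    using Omega_per_mod[OF \<sigma>1(1), of x y] Omega_per_mod[OF \<sigma>2(1), of x y] assms p by simp
qed

lemma card_fully_occupied_le:
  assumes "W > 0" "H > 0"
  shows "card {\<sigma> \<in> Omega_per W H. \<forall>q. \<not> vacant \<sigma> q} \<le> 2 ^ (nat W + nat H)"
proof -
  let ?F = "{\<sigma> \<in> Omega_per W H. \<forall>q. \<not> vacant \<sigma> q}"
  let ?axes = "\<lambda>\<sigma>. ({x \<in> {0..<W}. \<sigma> (x, 0)}, {y \<in> {0..<H}. \<sigma> (0, y)})"
  have "inj_on ?axes ?F"
    by (intro inj_onI fully_occupied_eq[OF assms]) (auto simp: set_eq_iff)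
  then have "card ?F = card (?axes ` ?F)" by (simp add: card_image)
  also have "\<dots> \<le> card (Pow {0..<W} \<times> Pow {0..<H})" by (rule card_mono) auto
  also have "\<dots> = 2 ^ (nat W + nat H)" by (simp add: card_cartesian_product card_Pow power_add)
  finally show ?thesis .
qed

section \<open>Stacks\<close>

text \<open>A stack is a word over rods (\<open>True\<close>, of length two) and unit gaps (\<open>False\<close>), laid out
  upwards from height \<open>p\<close>; a rod starting at height \<open>c - 1\<close> is recorded by its centre \<open>c\<close>.\<close>
fun stack_len :: "bool list \<Rightarrow> nat" where
  "stack_len [] = 0"
| "stack_len (b # bs) = (if b then 2 else 1) + stack_len bs"

fun stack_centres :: "bool list \<Rightarrow> int \<Rightarrow> int set" where
  "stack_centres [] p = {}"
| "stack_centres (b # bs) p = (if b then insert (p + 1) (stack_centres bs (p + 2)) else stack_centres bs (p + 1))"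

fun stack_gaps :: "bool list \<Rightarrow> int \<Rightarrow> int set" where
  "stack_gaps [] p = {}"
| "stack_gaps (b # bs) p = (if b then stack_gaps bs (p + 2) else insert p (stack_gaps bs (p + 1)))"

lemma stack_centres_range: "c \<in> stack_centres bs p \<Longrightarrow> p + 1 \<le> c \<and> c \<le> p + int (stack_len bs) - 1"
  by (induction bs arbitrary: p) (fastforce split: if_splits)+

lemma stack_gaps_range: "c \<in> stack_gaps bs p \<Longrightarrow> p \<le> c \<and> c < p + int (stack_len bs)"
  by (induction bs arbitrary: p) (fastforce split: if_splits)+

lemma stack_centres_sep:
  "c \<in> stack_centres bs p \<Longrightarrow> c' \<in> stack_centres bs p \<Longrightarrow> c < c' \<Longrightarrow> c + 2 \<le> c'"
proof (induction bs arbitrary: p)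
  case (Cons b bs)
  then show ?case
    using stack_centres_range[of c bs "p + 2"] stack_centres_range[of c' bs "p + 2"]
    by (auto split: if_splits)
qed simp

lemma stack_cover:
  "p \<le> y \<Longrightarrow> y < p + int (stack_len bs) \<Longrightarrow>
     y \<in> stack_gaps bs p \<or> y \<in> stack_centres bs p \<or> y + 1 \<in> stack_centres bs p"
proof (induction bs arbitrary: p)
  case (Cons b bs)
  then show ?case
    by (cases b; cases "y < p + (if b then 2 else 1)") (auto simp: not_less)
qed simp

lemma finite_stack_gaps: "finite (stack_gaps bs p)"
  by (induction bs arbitrary: p) auto

lemma card_stack_gaps: "card (stack_gaps bs p) = count_list bs False"
proof (induction bs arbitrary: p)
  case (Cons b bs)
  have "p \<notin> stack_gaps bs (p + 1)" using stack_gaps_range[of p bs "p + 1"] by auto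
  then show ?case using Cons finite_stack_gaps by auto
qed simp

lemma stack_centres_inj:
  "stack_len bs = stack_len bs' \<Longrightarrow> stack_centres bs p = stack_centres bs' p \<Longrightarrow> bs = bs'"
proof (induction bs arbitrary: bs' p)
  case Nil
  then show ?case by (cases bs') (auto split: if_splits)
next
  case (Cons b bs)
  then obtain b' bs'' where bs': "bs' = b' # bs''"
    by (cases bs') (auto split: if_splits)
  have notin: "p + 1 \<notin> stack_centres cs (p + 2)" "p + 1 \<notin> stack_centres cs (p + 1)" for cs
    using stack_centres_range[of "p + 1" cs] by fastforce+
  have "p + 1 \<in> stack_centres (b # bs) p \<longleftrightarrow> b" "p + 1 \<in> stack_centres (b' # bs'') p \<longleftrightarrow> b'"
    using notin by auto
  then have "b = b'" using Cons.prems bs' by simp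
  moreover have "stack_centres bs (if b then p + 2 else p + 1) = stack_centres bs'' (if b then p + 2 else p + 1)"
    using Cons.prems notin unfolding bs' \<open>b = b'\<close> by (cases b') (auto simp: insert_ident)
  ultimately show ?case
    using Cons bs' by auto
qed

definition stacks :: "nat \<Rightarrow> bool list set" where
  "stacks L = {bs. stack_len bs = L}"

lemma finite_stacks: "finite (stacks L)"
proof -
  have "length bs \<le> stack_len bs" for bs by (induction bs) auto
  then have "stacks L \<subseteq> {bs. set bs \<subseteq> UNIV \<and> length bs \<le> L}" unfolding stacks_def by auto
  then show ?thesis using finite_lists_length_le[of "UNIV :: bool set" L] finite_subset by auto
qed

lemma stacks_0: "stacks 0 = {[]}"
  unfolding stacks_def by (auto elim: stack_len.elims split: if_splits)

lemma stacks_1: "stacks (Suc 0) = {[False]}"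
  unfolding stacks_def by (auto elim!: stack_len.elims split: if_splits)

lemma stacks_Suc_Suc: "stacks (Suc (Suc L)) = Cons True ` stacks L \<union> Cons False ` stacks (Suc L)"
proof (rule set_eqI)
  fix bs
  show "bs \<in> stacks (Suc (Suc L)) \<longleftrightarrow> bs \<in> Cons True ` stacks L \<union> Cons False ` stacks (Suc L)"
    unfolding stacks_def by (cases bs) (auto split: if_splits)
qed

definition stack_sum :: "real \<Rightarrow> nat \<Rightarrow> real" where
  "stack_sum t L = (\<Sum>bs\<in>stacks L. t ^ count_list bs False)"

lemma stack_sum_Suc_Suc: "stack_sum t (Suc (Suc L)) = stack_sum t L + t * stack_sum t (Suc L)"
proof -
  have "stack_sum t (Suc (Suc L)) =
      (\<Sum>bs\<in>Cons True ` stacks L. t ^ count_list bs False) + (\<Sum>bs\<in>Cons False ` stacks (Suc L). t ^ count_list bs False)"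
    unfolding stack_sum_def stacks_Suc_Suc by (rule sum.union_disjoint) (auto simp: finite_stacks)
  also have "\<dots> = stack_sum t L + t * stack_sum t (Suc L)"
    unfolding stack_sum_def by (simp add: sum.reindex sum_distrib_left)
  finally show ?thesis .
qed

lemma stack_sum_ge:
  assumes "t > 0" "r > 0" "r\<^sup>2 = t * r + 1" "t \<le> r"
  shows "(t / r) * r ^ L \<le> stack_sum t L"
proof (induction L rule: induct_nat_012)
  case 0
  then show ?case using assms by (simp add: stack_sum_def stacks_0)
next
  case 1
  then show ?case using assms by (simp add: stack_sum_def stacks_1)
next
  case (ge2 L)
  have "(t / r) * r ^ Suc (Suc L) = (t / r) * r ^ L * (t * r + 1)"
    unfolding assms(3)[symmetric] by (simp add: power2_eq_square)
  also have "\<dots> = (t / r) * r ^ L + t * ((t / r) * r ^ Suc L)"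
    using assms(2) by (simp add: field_simps)
  also have "\<dots> \<le> stack_sum t L + t * stack_sum t (Suc L)"
    using ge2 assms(1) by (intro add_mono mult_left_mono) auto
  finally show ?case by (simp add: stack_sum_Suc_Suc)
qed

text \<open>Column \<open>i\<close>, the strip \<open>2 i \<le> x \<le> 2 i + 2\<close>, carries tiles centred on \<open>x = 2 i + 1\<close>
  at the rod centres of the stack \<open>F i\<close>; the pattern is repeated with periods \<open>W\<close> and \<open>H\<close>.\<close>
definition column_config :: "int \<Rightarrow> int \<Rightarrow> (int \<Rightarrow> bool list) \<Rightarrow> config" where
  "column_config W H F = (\<lambda>p. odd (fst p) \<and> snd p mod H \<in> stack_centres (F ((fst p mod W) div 2)) 0)"

definition column_stacks :: "int \<Rightarrow> int \<Rightarrow> (int \<Rightarrow> bool list) set" where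
  "column_stacks w H = PiE {0..<w} (\<lambda>_. stacks (nat H))"

lemma column_stacks_len: "F \<in> column_stacks w H \<Longrightarrow> i \<in> {0..<w} \<Longrightarrow> stack_len (F i) = nat H"
  unfolding column_stacks_def stacks_def by auto


lemma stack_centres_not_consecutive_mod:
  assumes "H > 0" "stack_len bs = nat H"
    and "y mod H \<in> stack_centres bs 0" "(y + 1) mod H \<in> stack_centres bs 0"
  shows False
proof -
  have "1 \<le> y mod H" "y mod H \<le> H - 1"
    using stack_centres_range[OF assms(3)] assms(1,2) by auto
  moreover have "(y + 1) mod H = (y mod H + 1) mod H" by (simp add: mod_add_left_eq)
  ultimately have "(y + 1) mod H = (if y mod H = H - 1 then 0 else y mod H + 1)"
    by auto
  then show False
    using stack_centres_range[OF assms(4)] stack_centres_sep[OF assms(3,4)] by (auto split: if_splits)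
qed


lemma column_config_in_Omega_per:
  assumes "w > 0" "H > 0" "F \<in> column_stacks w H"
  shows "column_config (2 * w) H F \<in> Omega_per (2 * w) H"
proof -
  have "2 \<le> \<bar>fst u - fst v\<bar> \<or> 2 \<le> \<bar>snd u - snd v\<bar>"
    if "column_config (2 * w) H F u" "column_config (2 * w) H F v" "u \<noteq> v" for u v
  proof (rule ccontr)
    obtain x1 y1 x2 y2 where uv: "u = (x1, y1)" "v = (x2, y2)" by fastforce
    assume near: "\<not> (2 \<le> \<bar>fst u - fst v\<bar> \<or> 2 \<le> \<bar>snd u - snd v\<bar>)"
    then have "\<bar>x1 - x2\<bar> < 2" "\<bar>y1 - y2\<bar> < 2" using uv by auto
    moreover have "odd x1" "odd x2" using that uv unfolding column_config_def by auto
    ultimately have "x1 = x2" by presburger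
    moreover from this have "y2 = y1 + 1 \<or> y1 = y2 + 1"
      using \<open>\<bar>y1 - y2\<bar> < 2\<close> uv that(3) by auto
    moreover have "(x1 mod (2 * w)) div 2 \<in> {0..<w}"
    proof -
      have "0 \<le> x1 mod (2 * w)" "x1 mod (2 * w) < 2 * w" using assms(1) by simp_all
      then show ?thesis by simp
    qed
    ultimately have "y1 mod H \<in> stack_centres (F ((x1 mod (2 * w)) div 2)) 0"
      "y2 mod H \<in> stack_centres (F ((x1 mod (2 * w)) div 2)) 0"
      "y2 = y1 + 1 \<or> y1 = y2 + 1" "(x1 mod (2 * w)) div 2 \<in> {0..<w}"
      using that uv unfolding column_config_def by auto
    then show False
      using stack_centres_not_consecutive_mod[OF assms(2) column_stacks_len[OF assms(3)]] by blast
  qed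
  then have "column_config (2 * w) H F \<in> Omega" unfolding Omega_iff by blast
  then show ?thesis unfolding Omega_per_def column_config_def by simp
qed


lemma inj_on_column_config:
  assumes "w > 0" "H > 0"
  shows "inj_on (column_config (2 * w) H) (column_stacks w H)"
proof (rule inj_onI, rule ext)
  fix F G i assume F: "F \<in> column_stacks w H" and G: "G \<in> column_stacks w H"
    and eq: "column_config (2 * w) H F = column_config (2 * w) H G"
  show "F i = G i"
  proof (cases "i \<in> {0..<w}")
    case False
    then show ?thesis
      using PiE_arb[OF F[unfolded column_stacks_def]] PiE_arb[OF G[unfolded column_stacks_def]] by simp
  next
    case i: True
    have "c \<in> stack_centres (F i) 0 \<longleftrightarrow> c \<in> stack_centres (G i) 0" for c
    proof (cases "0 \<le> c \<and> c < H")
      case True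
      moreover have "(2 * i + 1) mod (2 * w) = 2 * i + 1"
        using i by (intro mod_pos_pos_trivial) auto
      ultimately show ?thesis
        using fun_cong[OF eq, of "(2 * i + 1, c)"] unfolding column_config_def by simp
    next
      case False
      then show ?thesis
        using stack_centres_range[of c "F i" 0] stack_centres_range[of c "G i" 0]
          column_stacks_len[OF F i] column_stacks_len[OF G i] assms(2) by auto
    qed
    then have "stack_centres (F i) 0 = stack_centres (G i) 0" by blast
    then show ?thesis
      using stack_centres_inj column_stacks_len[OF F i] column_stacks_len[OF G i] by simp
  qed
qed


lemma sum_div2_atLeastLessThan:
  fixes g :: "int \<Rightarrow> nat"
  assumes "w \<ge> 0"
  shows "(\<Sum>a\<in>{0..<2 * w}. g (a div 2)) = 2 * (\<Sum>i\<in>{0..<w}. g i)"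
proof -
  have "(\<Sum>a\<in>{0..<2 * int n}. g (a div 2)) = 2 * (\<Sum>i\<in>{0..<int n}. g i)" for n
  proof (induction n)
    case (Suc n)
    have "{0..<2 * int (Suc n)} = insert (2 * int n + 1) (insert (2 * int n) {0..<2 * int n})"
      "{0..<int (Suc n)} = insert (int n) {0..<int n}"
      by auto
    then show ?case using Suc by simp
  qed simp
  from this[of "nat w"] show ?thesis using assms by simp
qed


lemma num_vacant_column_config_le:
  assumes "w > 0" "H > 0" "F \<in> column_stacks w H"
  shows "num_vacant (2 * w) H (column_config (2 * w) H F) \<le> 2 * (\<Sum>i\<in>{0..<w}. count_list (F i) False)"
proof -
  let ?\<sigma> = "column_config (2 * w) H F"
  let ?S = "SIGMA a:{0..<2 * w}. stack_gaps (F (a div 2)) 0"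
  have "{p. face p \<subseteq> rectR (2 * w) H \<and> vacant ?\<sigma> p} \<subseteq> ?S"
  proof
    fix p assume "p \<in> {p. face p \<subseteq> rectR (2 * w) H \<and> vacant ?\<sigma> p}"
    then obtain a b where p: "p = (a, b)" and ab: "0 \<le> a" "a < 2 * w" "0 \<le> b" "b < H"
      and vac: "vacant ?\<sigma> (a, b)"
      unfolding face_subset_rectR_iff by (cases p) auto
    let ?i = "a div 2"
    have i: "?i \<in> {0..<w}" using ab by auto
    show "p \<in> ?S"
    proof (rule ccontr)
      assume "p \<notin> ?S"
      then obtain c where c: "c \<in> stack_centres (F ?i) 0" "c = b \<or> c = b + 1"
        using stack_cover[of 0 b "F ?i"] p ab column_stacks_len[OF assms(3) i] by auto
      have "1 \<le> c" "c < H"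
        using stack_centres_range[OF c(1)] column_stacks_len[OF assms(3) i] assms(2) by auto
      then have "?\<sigma> (2 * ?i + 1, c)"
        using i c(1) unfolding column_config_def by simp
      moreover have "face (a, b) \<subseteq> tile (2 * ?i + 1, c)"
        unfolding face_subset_tile_iff using c(2) by auto
      ultimately show False using vac unfolding vacant_def by blast
    qed
  qed
  then have "num_vacant (2 * w) H ?\<sigma> \<le> card ?S"
    unfolding num_vacant_def by (rule card_mono[rotated]) (simp add: finite_stack_gaps)
  also have "card ?S = (\<Sum>a\<in>{0..<2 * w}. count_list (F (a div 2)) False)"
    by (simp add: card_SigmaI finite_stack_gaps card_stack_gaps)
  also have "\<dots> = 2 * (\<Sum>i\<in>{0..<w}. count_list (F i) False)"
    by (rule sum_div2_atLeastLessThan) (use assms(1) in simp)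
  finally show ?thesis .
qed

definition partition_sum :: "real \<Rightarrow> int \<Rightarrow> int \<Rightarrow> real" where
  "partition_sum lam W H = (\<Sum>\<sigma>\<in>Omega_per W H. weight lam W H \<sigma>)"

lemma weight_pos: "lam > 0 \<Longrightarrow> 0 < weight lam W H \<sigma>"
  unfolding weight_def by simp

lemma weight_le_partition_sum:
  assumes "W > 0" "H > 0" "lam > 0" "\<sigma> \<in> Omega_per W H"
  shows "weight lam W H \<sigma> \<le> partition_sum lam W H"
  unfolding partition_sum_def using assms
  by (intro member_le_sum finite_Omega_per) (auto intro: less_imp_le weight_pos)

lemma weight_fully_occupied:
  assumes "\<forall>q. \<not> vacant \<sigma> q" "lam > 0"
  shows "weight lam W H \<sigma> = 1"
proof -
  have "{p. face p \<subseteq> rectR W H \<and> vacant \<sigma> p} = {}" using assms(1) by auto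
  then have "num_vacant W H \<sigma> = 0" unfolding num_vacant_def by (simp only: card.empty)
  then show ?thesis unfolding weight_def using assms(2) by simp
qed

lemma partition_sum_ge_1:
  assumes "w > 0" "h > 0" "lam > 0"
  shows "1 \<le> partition_sum lam (2 * w) (2 * h)"
proof -
  let ?F = "restrict (\<lambda>_. replicate (nat h) True) {0..<w}"
  have "stack_len (replicate k True) = 2 * k" for k by (induction k) auto
  then have F: "?F \<in> column_stacks w (2 * h)"
    unfolding column_stacks_def stacks_def using assms(2) by auto
  have "num_vacant (2 * w) (2 * h) (column_config (2 * w) (2 * h) ?F) \<le> 2 * (\<Sum>i\<in>{0..<w}. count_list (?F i) False)"
    using assms by (intro num_vacant_column_config_le F) simp_all
  also have "\<dots> = 0" by (simp add: count_list_0_iff)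
  finally have "weight lam (2 * w) (2 * h) (column_config (2 * w) (2 * h) ?F) = 1"
    unfolding weight_def using assms(3) by simp
  moreover have "weight lam (2 * w) (2 * h) (column_config (2 * w) (2 * h) ?F) \<le> partition_sum lam (2 * w) (2 * h)"
    using assms by (intro weight_le_partition_sum column_config_in_Omega_per F) simp_all
  ultimately show ?thesis by simp
qed

text \<open>Each column of width two contributes \<open>stack_sum t\<close> with \<open>t = lam powr (-1/2)\<close>: a gap of
  the stack leaves two vacant faces, each of weight \<open>lam powr (-1/4)\<close>.\<close>
lemma partition_sum_ge_stack_sum:
  assumes "w > 0" "H > 0" "lam \<ge> 1"
  shows "stack_sum (lam powr (-1/2)) (nat H) ^ nat w \<le> partition_sum lam (2 * w) H"
proof -
  let ?t = "lam powr (-1/2)"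
  have "stack_sum ?t (nat H) ^ nat w = (\<Prod>i\<in>{0..<w}. \<Sum>bs\<in>stacks (nat H). ?t ^ count_list bs False)"
    by (simp add: stack_sum_def)
  also have "\<dots> = (\<Sum>F\<in>column_stacks w H. \<Prod>i\<in>{0..<w}. ?t ^ count_list (F i) False)"
    unfolding column_stacks_def by (rule prod_sum_PiE) (simp_all add: finite_stacks)
  also have "\<dots> \<le> (\<Sum>F\<in>column_stacks w H. weight lam (2 * w) H (column_config (2 * w) H F))"
  proof (rule sum_mono)
    fix F assume F: "F \<in> column_stacks w H"
    have "(\<Prod>i\<in>{0..<w}. ?t ^ count_list (F i) False) = ?t ^ (\<Sum>i\<in>{0..<w}. count_list (F i) False)"
      by (simp add: power_sum)
    also have "\<dots> = lam powr (- (1/4) * real (2 * (\<Sum>i\<in>{0..<w}. count_list (F i) False)))"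
      using assms(3) by (simp add: powr_realpow[symmetric] powr_powr)
    also have "\<dots> \<le> weight lam (2 * w) H (column_config (2 * w) H F)"
    proof -
      have "real (num_vacant (2 * w) H (column_config (2 * w) H F)) \<le> real (2 * (\<Sum>i\<in>{0..<w}. count_list (F i) False))"
        using num_vacant_column_config_le[OF assms(1,2) F] by (simp only: of_nat_le_iff)
      then show ?thesis
        unfolding weight_def using assms(3) by (intro powr_mono) simp_all
    qed
    finally show "(\<Prod>i\<in>{0..<w}. ?t ^ count_list (F i) False) \<le> weight lam (2 * w) H (column_config (2 * w) H F)" .
  qed
  also have "\<dots> = (\<Sum>\<sigma>\<in>column_config (2 * w) H ` column_stacks w H. weight lam (2 * w) H \<sigma>)"
    by (simp add: sum.reindex[OF inj_on_column_config[OF assms(1,2)]])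
  also have "\<dots> \<le> partition_sum lam (2 * w) H"
    unfolding partition_sum_def
    using assms column_config_in_Omega_per finite_Omega_per weight_pos
    by (intro sum_mono2) (auto intro: less_imp_le)
  finally show ?thesis .
qed

section \<open>Chessboard estimates\<close>

lemma norm_RL_eq_mu_per:
  assumes "w > 0" "h > 0"
  shows "norm_RL g a b 1 1 lam (2 * w) (2 * h) =
    mu_per lam (2 * w) (2 * h) (\<lambda>\<sigma>. \<Prod>C\<in>TRL a b 1 1 (2 * w) (2 * h). act C g \<sigma>)
      powr (1 / (real_of_int (2 * w) * real_of_int (2 * h)))"
  unfolding norm_RL_def card_TRL[OF assms] using assms by simp

lemma mu_per_prod_act_nonneg:
  assumes "lam > 0" "\<And>\<sigma>. 0 \<le> g \<sigma>"
  shows "0 \<le> mu_per lam W H (\<lambda>\<sigma>. \<Prod>C\<in>TRL x0 y0 K L W H. act C g \<sigma>)"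
  unfolding mu_per_def act_def using assms
  by (intro divide_nonneg_nonneg sum_nonneg prod_nonneg mult_nonneg_nonneg)
    (auto intro: less_imp_le weight_pos)

lemma num_vacant_empty:
  assumes "W > 0" "H > 0"
  shows "num_vacant W H (\<lambda>_. False) = nat W * nat H"
proof -
  have "{p. face p \<subseteq> rectR W H \<and> vacant (\<lambda>_. False) p} = {0..<W} \<times> {0..<H}"
    unfolding face_subset_rectR_iff vacant_def by auto
  then show ?thesis unfolding num_vacant_def by (simp add: card_cartesian_product)
qed

lemma norm_RL_vacant_ind_le:
  assumes "w > 0" "h > 0" "lam > 0"
  shows "norm_RL (vacant_ind (a, b)) a b 1 1 lam (2 * w) (2 * h) \<le> lam powr (- 1 / 4)"
proof -
  let ?N = "real_of_int (2 * w) * real_of_int (2 * h)"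
  let ?\<Omega> = "Omega_per (2 * w) (2 * h)"
  let ?wt = "weight lam (2 * w) (2 * h)"
  have N: "?N > 0" using assms by simp
  have "(\<Sum>\<sigma>\<in>?\<Omega>. ?wt \<sigma> * (\<Prod>C\<in>TRL a b 1 1 (2 * w) (2 * h). act C (vacant_ind (a, b)) \<sigma>)) =
      (\<Sum>\<sigma>\<in>?\<Omega>. if \<sigma> = (\<lambda>_. False) then ?wt \<sigma> else 0)"
    by (rule sum.cong) (simp_all add: prod_TRL_act_vacant_ind[OF assms(1,2)])
  also have "\<dots> = lam powr (- 1 / 4 * ?N)"
    using assms finite_Omega_per[of "2 * w" "2 * h"] empty_config_in_Omega_per
    by (simp add: sum.delta weight_def num_vacant_empty)
  finally have "mu_per lam (2 * w) (2 * h) (\<lambda>\<sigma>. \<Prod>C\<in>TRL a b 1 1 (2 * w) (2 * h). act C (vacant_ind (a, b)) \<sigma>) =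
      lam powr (- 1 / 4 * ?N) / partition_sum lam (2 * w) (2 * h)"
    unfolding mu_per_def partition_sum_def by simp
  also have "\<dots> \<le> lam powr (- 1 / 4 * ?N)"
    using partition_sum_ge_1[OF assms] by (intro frac_le[where w = 1, simplified]) auto
  finally have "norm_RL (vacant_ind (a, b)) a b 1 1 lam (2 * w) (2 * h) \<le> (lam powr (- 1 / 4 * ?N)) powr (1 / ?N)"
    unfolding norm_RL_eq_mu_per[OF assms(1,2)] using N assms(3)
    by (intro powr_mono2 mu_per_prod_act_nonneg) (simp_all add: vacant_ind_def)
  also have "\<dots> = lam powr (- 1 / 4 * ?N * (1 / ?N))"
    by (rule powr_powr)
  also have "- 1 / 4 * ?N * (1 / ?N) = - 1 / 4"
    using assms(1,2) by simp
  finally show ?thesis .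
qed

lemma stack_sum_pos:
  assumes "t > 0"
  shows "0 < stack_sum t L"
proof -
  have "stack_len (replicate L False) = L" by (induction L) auto
  then have "stacks L \<noteq> {}" unfolding stacks_def by blast
  then show ?thesis
    unfolding stack_sum_def using assms finite_stacks by (intro sum_pos) auto
qed

lemma norm_RL_occupied_ind_le:
  assumes "w > 0" "h > 0" "lam \<ge> 1"
  shows "norm_RL (occupied_ind (a, b)) a b 1 1 lam (2 * w) (2 * h) \<le>
    (2 ^ (nat (2 * w) + nat (2 * h)) / stack_sum (lam powr (- 1 / 2)) (nat (2 * h)) ^ nat w)
      powr (1 / (real_of_int (2 * w) * real_of_int (2 * h)))"
proof -
  let ?\<Omega> = "Omega_per (2 * w) (2 * h)"
  let ?wt = "weight lam (2 * w) (2 * h)"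
  let ?A = "stack_sum (lam powr (- 1 / 2)) (nat (2 * h)) ^ nat w"
  let ?mu = "mu_per lam (2 * w) (2 * h) (\<lambda>\<sigma>. \<Prod>C\<in>TRL a b 1 1 (2 * w) (2 * h). act C (occupied_ind (a, b)) \<sigma>)"
  have \<Omega>: "finite ?\<Omega>" using assms by (intro finite_Omega_per) simp_all
  have "(\<Sum>\<sigma>\<in>?\<Omega>. ?wt \<sigma> * (\<Prod>C\<in>TRL a b 1 1 (2 * w) (2 * h). act C (occupied_ind (a, b)) \<sigma>)) =
      (\<Sum>\<sigma>\<in>?\<Omega>. if \<forall>q. \<not> vacant \<sigma> q then 1 else 0)"
    using assms by (intro sum.cong) (simp_all add: prod_TRL_act_occupied_ind weight_fully_occupied)
  also have "\<dots> = real (card {\<sigma> \<in> ?\<Omega>. \<forall>q. \<not> vacant \<sigma> q})"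
    unfolding sum.inter_filter[OF \<Omega>, symmetric] by simp
  also have "\<dots> \<le> 2 ^ (nat (2 * w) + nat (2 * h))"
    using card_fully_occupied_le[of "2 * w" "2 * h"] assms
    by (simp flip: of_nat_le_iff del: of_nat_le_iff)
  finally have num: "(\<Sum>\<sigma>\<in>?\<Omega>. ?wt \<sigma> * (\<Prod>C\<in>TRL a b 1 1 (2 * w) (2 * h). act C (occupied_ind (a, b)) \<sigma>))
      \<le> 2 ^ (nat (2 * w) + nat (2 * h))" .
  have A: "0 < ?A" using assms by (simp add: stack_sum_pos)
  have Z: "?A \<le> partition_sum lam (2 * w) (2 * h)"
    using assms by (intro partition_sum_ge_stack_sum) simp_all
  have "?mu \<le> 2 ^ (nat (2 * w) + nat (2 * h)) / ?A"
    unfolding mu_per_def partition_sum_def[symmetric] by (rule frac_le[OF _ num A Z]) simp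
  moreover have "0 \<le> ?mu"
    using assms(3) by (intro mu_per_prod_act_nonneg) (simp_all add: occupied_ind_def)
  ultimately show ?thesis
    unfolding norm_RL_eq_mu_per[OF assms(1,2)] using assms(1,2)
    by (intro powr_mono2) (simp_all add: zero_le_mult_iff)
qed

definition fib_root :: "real \<Rightarrow> real" where
  "fib_root t = (t + sqrt (t\<^sup>2 + 4)) / 2"

lemma fib_root:
  assumes "t > 0"
  shows "0 < fib_root t" "(fib_root t)\<^sup>2 = t * fib_root t + 1" "t \<le> fib_root t" "1 + t / 2 \<le> fib_root t"
proof -
  have "t \<le> sqrt (t\<^sup>2 + 4)" using assms real_sqrt_le_mono[of "t\<^sup>2" "t\<^sup>2 + 4"] by simp
  moreover have "2 \<le> sqrt (t\<^sup>2 + 4)" using real_sqrt_le_mono[of 4 "t\<^sup>2 + 4"] by simp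
  ultimately show "0 < fib_root t" "t \<le> fib_root t" "1 + t / 2 \<le> fib_root t"
    unfolding fib_root_def using assms by simp_all
  have "(sqrt (t\<^sup>2 + 4))\<^sup>2 = t\<^sup>2 + 4" by simp
  then show "(fib_root t)\<^sup>2 = t * fib_root t + 1"
    unfolding fib_root_def by (simp add: power2_eq_square field_simps)
qed

lemma root_of_bound_eq_exp:
  fixes m :: nat and t r :: real
  assumes "m > 0" "even m" "t > 0" "r > 0"
  shows "(2 ^ (2 * m) / ((t / r) * r ^ m) ^ (m div 2)) powr (1 / (real m * real m))
       = exp ((2 * ln 2 - ln (t / r) / 2) / real m - ln r / 2)"
proof -
  let ?X = "(t / r) * r ^ m"
  have X: "?X > 0" using assms by simp
  have "ln (2 ^ (2 * m) / ?X ^ (m div 2)) = ln (2 ^ (2 * m)) - ln (?X ^ (m div 2))"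
    using X by (intro ln_divide_pos) simp_all
  also have "\<dots> = real (2 * m) * ln 2 - real (m div 2) * ln ?X"
    by (simp only: ln_realpow)
  also have "ln ?X = ln (t / r) + ln (r ^ m)"
    by (rule ln_mult_pos) (use assms(3,4) in simp_all)
  also have "ln (r ^ m) = real m * ln r"
    by (rule ln_realpow)
  also have "real (m div 2) = real m / 2"
    using assms(2) by (simp add: real_of_nat_div)
  finally have L: "ln (2 ^ (2 * m) / ?X ^ (m div 2)) = real (2 * m) * ln 2 - (real m / 2) * (ln (t / r) + real m * ln r)" .
  have "(2 ^ (2 * m) / ?X ^ (m div 2)) powr (1 / (real m * real m)) =
      exp (1 / (real m * real m) * ln (2 ^ (2 * m) / ?X ^ (m div 2)))"
  proof -
    have "0 < 2 ^ (2 * m) / ?X ^ (m div 2)" using X by (intro divide_pos_pos zero_less_power) simp_all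
    then have "2 ^ (2 * m) / ?X ^ (m div 2) \<noteq> 0" by linarith
    then show ?thesis by (simp only: powr_def if_False)
  qed
  also have "1 / (real m * real m) * ln (2 ^ (2 * m) / ?X ^ (m div 2)) =
      (2 * ln 2 - ln (t / r) / 2) / real m - ln r / 2"
    unfolding L using assms(1) by (simp add: field_simps)
  finally show ?thesis .
qed

lemma norm_RL_occupied_ind_le_exp:
  assumes "m > 0" "even m" "lam \<ge> 1"
  defines "t \<equiv> lam powr (- 1 / 2)"
  shows "norm_RL (occupied_ind (a, b)) a b 1 1 lam (int m) (int m) \<le>
    exp ((2 * ln 2 - ln (t / fib_root t) / 2) / real m - ln (fib_root t) / 2)"
proof -
  let ?r = "fib_root t"
  let ?w = "int (m div 2)"
  have t: "t > 0" unfolding t_def using assms(3) by simp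
  have m: "2 * ?w = int m" "nat (2 * ?w) = m" "nat ?w = m div 2" "real_of_int (2 * ?w) = real m"
    "0 < ?w"
    using assms(1,2) by (auto elim: evenE)
  have X: "0 < (t / ?r) * ?r ^ m" using fib_root(1)[OF t] t by simp
  have "norm_RL (occupied_ind (a, b)) a b 1 1 lam (int m) (int m) \<le>
      (2 ^ (2 * m) / stack_sum t m ^ (m div 2)) powr (1 / (real m * real m))"
    using norm_RL_occupied_ind_le[OF m(5) m(5) assms(3), of a b] unfolding m t_def by (simp add: mult_2)
  also have "\<dots> \<le> (2 ^ (2 * m) / ((t / ?r) * ?r ^ m) ^ (m div 2)) powr (1 / (real m * real m))"
    using X t fib_root(1)[OF t] stack_sum_pos[OF t, of m] zero_less_power[OF stack_sum_pos[OF t], of m "m div 2"] stack_sum_ge[OF t fib_root(1-3)[OF t], of m]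
    by (intro powr_mono2 divide_left_mono power_mono mult_pos_pos zero_less_power) simp_all
  also have "\<dots> = exp ((2 * ln 2 - ln (t / ?r) / 2) / real m - ln ?r / 2)"
    using assms(1,2) t fib_root(1)[OF t] by (rule root_of_bound_eq_exp)
  finally show ?thesis .
qed

lemma exp_neg_half_ln_le:
  fixes c t r :: real
  assumes "t > 0" "1 + t / 2 \<le> r" "c * t \<le> 1 / 2 - 2 * c"
  shows "exp (- ln r / 2) \<le> 1 - c * t"
proof -
  have ct: "c * t < 1 / 2"
  proof (cases "c \<le> 0")
    case True
    then have "c * t \<le> 0" using assms(1) by (simp add: mult_nonpos_nonneg)
    then show ?thesis by simp
  qed (use assms(3) in simp)
  have "(1 + t / 2) * (1 - 2 * c * t) \<le> r * (1 - c * t)\<^sup>2"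
  proof (rule mult_mono)
    have "(1 - c * t)\<^sup>2 = (1 - 2 * c * t) + (c * t)\<^sup>2"
      by (simp add: power2_eq_square algebra_simps)
    then show "1 - 2 * c * t \<le> (1 - c * t)\<^sup>2" by simp
  qed (use assms ct in auto)
  moreover have "1 \<le> (1 + t / 2) * (1 - 2 * c * t)"
    using assms(1,3) mult_left_mono[OF assms(3), of t] by (simp add: algebra_simps)
  ultimately have "0 \<le> ln (r * (1 - c * t)\<^sup>2)"
    by simp
  also have "ln (r * (1 - c * t)\<^sup>2) = ln r + 2 * ln (1 - c * t)"
    using assms ct by (simp add: ln_mult ln_realpow)
  finally have "exp (- ln r / 2) \<le> exp (ln (1 - c * t))"
    by simp
  then show ?thesis
    using ct by simp
qed

lemma fact_tendsto_div: "((\<lambda>n. K / real (fact n)) \<longlongrightarrow> 0) sequentially"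
proof (rule tendsto_divide_0[OF tendsto_const])
  have "real n \<le> real (fact n)" for n
    using fact_ge_self[of n] by (simp only: of_nat_le_iff)
  then have "\<forall>\<^sub>F n in sequentially. real n \<le> real (fact n)"
    by simp
  then show "filterlim (\<lambda>n. real (fact n)) at_infinity sequentially"
    by (intro filterlim_at_top_imp_at_infinity filterlim_at_top_mono[OF filterlim_real_sequentially])
qed

lemma fact_eq_double:
  assumes "n \<ge> 2"
  obtains w where "w > 0" "(fact n :: int) = 2 * w"
proof -
  have "(2 :: nat) dvd fact n" using dvd_fact[of 2 n] assms by simp
  then have "(2 :: int) dvd fact n" by (metis of_nat_fact of_nat_dvd_iff of_nat_numeral)
  moreover have "(2 :: int) \<le> fact n"
    using fact_ge_self[of n] assms by (metis of_nat_fact of_nat_le_iff of_nat_numeral order_trans)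
  ultimately show ?thesis using that by (auto elim!: dvdE)
qed

lemma norm_face_le_of_eventually:
  assumes "\<forall>\<^sub>F n in sequentially. norm_RL g (fst p) (snd p) 1 1 lam (fact n) (fact n) \<le> B n"
    and "B \<longlonglongrightarrow> L"
  shows "norm_face g p lam \<le> ereal L"
proof -
  have "norm_face g p lam \<le> Limsup sequentially (\<lambda>n. ereal (B n))"
    unfolding norm_face_def norm_R_def
    by (rule Limsup_mono) (use assms(1) in \<open>auto elim: eventually_mono\<close>)
  also have "\<dots> = ereal L"
    by (rule lim_imp_Limsup) (use assms(2) in simp_all)
  finally show ?thesis .
qed

lemma norm_face_vacant_ind_le:
  assumes "lam > 0"
  shows "norm_face (vacant_ind (a, b)) (a, b) lam \<le> ereal (lam powr (- 1 / 4))"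
proof (rule norm_face_le_of_eventually)
  show "\<forall>\<^sub>F n in sequentially.
      norm_RL (vacant_ind (a, b)) (fst (a, b)) (snd (a, b)) 1 1 lam (fact n) (fact n) \<le> lam powr (- 1 / 4)"
    using eventually_ge_at_top[of 2]
  proof (rule eventually_mono)
    fix n :: nat assume "n \<ge> 2"
    then obtain w where "w > 0" "(fact n :: int) = 2 * w" by (rule fact_eq_double)
    then show "norm_RL (vacant_ind (a, b)) (fst (a, b)) (snd (a, b)) 1 1 lam (fact n) (fact n) \<le> lam powr (- 1 / 4)"
      using norm_RL_vacant_ind_le[OF _ _ assms] by simp
  qed
qed simp

lemma norm_face_occupied_ind_le:
  assumes "lam \<ge> 1" "c * lam powr (- 1 / 2) \<le> 1 / 2 - 2 * c"
  shows "norm_face (occupied_ind (a, b)) (a, b) lam \<le> ereal (1 - c * lam powr (- 1 / 2))"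
proof -
  define t where "t = lam powr (- 1 / 2)"
  define K where "K = 2 * ln 2 - ln (t / fib_root t) / 2"
  have t: "t > 0" unfolding t_def using assms(1) by simp
  have "norm_face (occupied_ind (a, b)) (a, b) lam \<le> ereal (exp (0 - ln (fib_root t) / 2))"
  proof (rule norm_face_le_of_eventually)
    show "\<forall>\<^sub>F n in sequentially. norm_RL (occupied_ind (a, b)) (fst (a, b)) (snd (a, b)) 1 1 lam (fact n) (fact n)
        \<le> exp (K / real (fact n) - ln (fib_root t) / 2)"
      using eventually_ge_at_top[of 2]
    proof (rule eventually_mono)
      fix n :: nat assume "n \<ge> 2"
      then have "even (fact n :: nat)" using dvd_fact[of 2 n] by simp
      then show "norm_RL (occupied_ind (a, b)) (fst (a, b)) (snd (a, b)) 1 1 lam (fact n) (fact n)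
          \<le> exp (K / real (fact n) - ln (fib_root t) / 2)"
        using norm_RL_occupied_ind_le_exp[of "fact n" lam a b] assms(1)
        unfolding K_def t_def by (simp add: of_nat_fact)
    qed
    show "(\<lambda>n. exp (K / real (fact n) - ln (fib_root t) / 2)) \<longlonglongrightarrow> exp (0 - ln (fib_root t) / 2)"
      by (intro tendsto_exp tendsto_diff fact_tendsto_div tendsto_const)
  qed
  also have "\<dots> \<le> ereal (1 - c * lam powr (- 1 / 2))"
    using exp_neg_half_ln_le[OF t fib_root(4)[OF t]] assms(2) unfolding t_def by simp
  finally show ?thesis .
qed

lemma eventually_occupied_threshold:
  assumes "c < 1 / 4"
  shows "\<forall>\<^sub>F lam :: real in at_top. 1 \<le> lam \<and> c * lam powr (- 1 / 2) \<le> 1 / 2 - 2 * c"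
proof -
  have "((\<lambda>lam :: real. c * lam powr (- 1 / 2)) \<longlongrightarrow> c * 0) at_top"
    by (intro tendsto_mult tendsto_const tendsto_neg_powr filterlim_ident) simp
  then have "\<forall>\<^sub>F lam :: real in at_top. c * lam powr (- 1 / 2) < 1 / 2 - 2 * c"
    by (rule order_tendstoD) (use assms in simp)
  then show ?thesis
    using eventually_ge_at_top[of 1] by eventually_elim simp
qed

theorem corollary4p5:
  fixes f :: "int \<times> int"
  shows "(\<forall>lam::real. lam > 0 \<longrightarrow>
            norm_face (vacant_ind f) f lam \<le> ereal (lam powr (- 1 / 4)))
       \<and> (\<forall>c::real. c < 1 / 4 \<longrightarrow>
            (\<exists>lam0::real. \<forall>lam \<ge> lam0.
               norm_face (occupied_ind f) f lam \<le> ereal (1 - c * lam powr (- 1 / 2))))"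
proof (intro conjI allI impI)
  obtain a b where f: "f = (a, b)" by fastforce
  show "norm_face (vacant_ind f) f lam \<le> ereal (lam powr (- 1 / 4))" if "lam > 0" for lam
    unfolding f using that by (rule norm_face_vacant_ind_le)
  fix c :: real assume "c < 1 / 4"
  then obtain lam0 where "\<And>lam. lam \<ge> lam0 \<Longrightarrow> 1 \<le> lam \<and> c * lam powr (- 1 / 2) \<le> 1 / 2 - 2 * c"
    using eventually_occupied_threshold unfolding eventually_at_top_linorder by blast
  then show "\<exists>lam0. \<forall>lam \<ge> lam0. norm_face (occupied_ind f) f lam \<le> ereal (1 - c * lam powr (- 1 / 2))"
    unfolding f by (blast intro: norm_face_occupied_ind_le)
qed

end
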